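(* Let $p>1$, $p'=\frac{p}{p-1}$, and let $b\in C^1([0,\infty))$ satisfy $b(t)>0$ for $t\ge0$ and $\limsup_{t\to\infty}\frac{|b'(t)|}{b(t)^2}<1$. Let $\Phi(t)=\int_t^\infty\exp(-\int_t^sb(\sigma)d\sigma)\,ds$. Let $\eta\in C^2([0,\infty))$ satisfy $\eta=1$ on $[0,1/2]$, $\eta$ decreasing on $(1/2,1)$, $\eta=0$ on $[1,\infty)$, and let $\eta^*(s)=0$ for $s\in[0,1/2)$, $\eta^*(s)=\eta(s)$ for $s\ge 1/2$. For $R>0$ set $$s_R(x,t)=R^{-1}\Big(1+|x|^2+\int_0^t\Phi(\sigma)\,d\sigma\Big),\quad \psi_R=[\eta(s_R)]^{2p'},\quad \psi_R^*=[\eta^*(s_R)]^{2p'},$$ on $\mathbb{R}^N\times[0,\infty)$, and $P(R)=\{(x,t)\in\mathbb{R}^N\times[0,\infty): 1+|x|^2+\int_0^t\Phi(\sigma)d\sigma\le R\}$. Then: (i) $\psi_R(x,t)=1$ for $(x,t)\in P(R/2)$ and $\psi_R(x,t)=0$ for $(x,t)\notin P(R)$; (ii) there is $C_1>0$ such that $|\partial_t\psi_R(x,t)|\le C_1R^{-1}\Phi(t)[\psi_R^*(x,t)]^{1/p}$ for all $R>0$ and $(x,t)\in P(R)$; (iii) there is $C_2>0$ such that $|\Delta\psi_R(x,t)|\le C_2R^{-1}[\psi_R^*(x,t)]^{1/p}$ for all $R>0$ and $(x,t)\in P(R)$; (iv) if in addition $1/b\notin L^1(0,\infty)$, there is $C_3>0$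 such that $|\partial_t^2\psi_R(x,t)|\le C_3R^{-1}[\psi_R^*(x,t)]^{1/p}$ for all $R>0$ and $(x,t)\in P(R)$. *)

theory Defs
  imports "HOL-Analysis.Analysis"
begin

definition conj_exp :: "real \<Rightarrow> real" where
  "conj_exp p = p / (p - 1)"

definition Phi :: "(real \<Rightarrow> real) \<Rightarrow> real \<Rightarrow> real" where
  "Phi b t = integral {t..} (\<lambda>s. exp (- integral {t..s} b))"

definition Qty :: "(real \<Rightarrow> real) \<Rightarrow> real ^ 'n \<Rightarrow> real \<Rightarrow> real" where
  "Qty b x t = 1 + (norm x)\<^sup>2 + integral {0..t} (Phi b)"

definition sR :: "(real \<Rightarrow> real) \<Rightarrow> real \<Rightarrow> real ^ 'n \<Rightarrow> real \<Rightarrow> real" where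
  "sR b R x t = Qty b x t / R"

definition eta_star :: "(real \<Rightarrow> real) \<Rightarrow> real \<Rightarrow> real" where
  "eta_star \<eta> s = (if s < 1/2 then 0 else \<eta> s)"

definition psiR :: "(real \<Rightarrow> real) \<Rightarrow> (real \<Rightarrow> real) \<Rightarrow> real \<Rightarrow> real \<Rightarrow> real ^ 'n \<Rightarrow> real \<Rightarrow> real" where
  "psiR b \<eta> p R x t = (\<eta> (sR b R x t)) powr (2 * conj_exp p)"

definition psiR_star :: "(real \<Rightarrow> real) \<Rightarrow> (real \<Rightarrow> real) \<Rightarrow> real \<Rightarrow> real \<Rightarrow> real ^ 'n \<Rightarrow> real \<Rightarrow> real" where
  "psiR_star b \<eta> p R x t = (eta_star \<eta> (sR b R x t)) powr (2 * conj_exp p)"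

definition inP :: "(real \<Rightarrow> real) \<Rightarrow> real \<Rightarrow> real ^ 'n \<Rightarrow> real \<Rightarrow> bool" where
  "inP b R x t \<longleftrightarrow> t \<ge> 0 \<and> Qty b x t \<le> R"

text \<open>Time derivative (one-sided at t = 0, domain [0,infty)).\<close>
definition dt :: "(real ^ 'n \<Rightarrow> real \<Rightarrow> real) \<Rightarrow> real ^ 'n \<Rightarrow> real \<Rightarrow> real" where
  "dt f x t = vector_derivative (\<lambda>\<tau>. f x \<tau>) (at t within {0..})"

definition lap :: "(real ^ 'n \<Rightarrow> real) \<Rightarrow> real ^ 'n \<Rightarrow> real" where
  "lap f x = (\<Sum>i\<in>UNIV. deriv (deriv (\<lambda>r. f (x + r *\<^sub>R axis i 1))) 0)"

end

theory Submission
  imports Defs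
begin

text \<open>Write \<psi>_R = G(s_R) with G = \<eta>^q and q = 2p'. Since \<eta>' and \<eta>'' vanish below 1/2 and q > 2, both G' and G''
  are bounded by a multiple of (\<eta>*)^(q-2), which is ((\<eta>*)^q)^(1/p) because q - 2 = q/p.
  On P(R) the spatial derivatives of s_R are O(1/R) because |x|^2 \<le> R, and \<partial>_t s_R = \<Phi>/R.
  The second time derivative also involves \<Phi>' = b \<Phi> - 1 and \<Phi>^2/R^2. Writing
  \<Phi>(t) = e^B(t) \<integral>_t^\<infinity> e^-B with B(t) = \<integral>_0^t b, the hypothesis limsup |b'|/b^2 < 1 gives
  (1 - \<theta>) \<integral>_t^\<infinity> e^-B \<le> e^-B(t) / b(t) for large t, so b \<Phi> is bounded by some L; then
  (\<Phi>^2 - 2L \<integral>_0^t \<Phi>)' \<le> 0 yields \<Phi>^2 \<le> C (1 + \<integral>_0^t \<Phi>) \<le> C R on P(R).\<close>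

section \<open>Calculus on half-lines\<close>

lemma continuous_on_Ici_if_has_derivative:
  fixes f f' :: "real \<Rightarrow> real"
  assumes "\<And>t. a \<le> t \<Longrightarrow> (f has_real_derivative f' t) (at t within {a..})"
  shows "continuous_on {a..} f"
  unfolding continuous_on_eq_continuous_within using assms
  by (meson DERIV_continuous atLeast_iff)

lemma has_real_derivative_integral_Ici:
  fixes f :: "real \<Rightarrow> real"
  assumes "continuous_on {a..} f" "a \<le> t"
  shows "((\<lambda>u. integral {a..u} f) has_real_derivative f t) (at t within {a..})"
proof -
  have "continuous_on {a..t+1} f"
    using assms(1) by (rule continuous_on_subset) auto
  then have "((\<lambda>u. integral {a..u} f) has_real_derivative f t) (at t within {a..t+1})"
    using integral_has_real_derivative assms(2) by auto
  moreover have "at t within {a..t+1} = at t within {a..}"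
    by (rule at_within_nhd[where S="{..<t+1}"]) auto
  ultimately show ?thesis by simp
qed

lemma
  fixes f :: "real \<Rightarrow> real"
  assumes cont: "continuous_on {a..} f" and nonneg: "\<And>x. a \<le> x \<Longrightarrow> 0 \<le> f x"
    and bounded: "\<And>S. a \<le> S \<Longrightarrow> integral {a..S} f \<le> M"
  shows integrable_Ici_if_integrals_bounded: "f integrable_on {a..}"
    and integral_Ici_le_if_integrals_bounded: "integral {a..} f \<le> M"
proof -
  define g where "g k x = (if x \<in> {a..a + real k} then f x else 0)" for k :: nat and x
  have integral_g: "integral {a..} (g k) = integral {a..a + real k} f" for k
    unfolding g_def integral_restrict_Int by (rule arg_cong[where f="\<lambda>S. integral S f"]) auto
  have "f integrable_on {a..a + real k}" for k
    by (rule integrable_continuous_interval, rule continuous_on_subset[OF cont]) auto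
  then have integrable_g: "g k integrable_on {a..}" for k
    unfolding g_def integrable_restrict_Int by (simp add: Int_absorb2)
  have "g k x \<le> g (Suc k) x" if "x \<in> {a..}" for k x
    using that nonneg by (auto simp: g_def)
  moreover have "(\<lambda>k. g k x) \<longlonglongrightarrow> f x" if "x \<in> {a..}" for x
  proof (rule tendsto_eventually)
    obtain n :: nat where "x - a \<le> real n" using real_arch_simple by blast
    then show "\<forall>\<^sub>F k in sequentially. g k x = f x"
      unfolding eventually_sequentially using that by (intro exI[of _ n]) (auto simp: g_def)
  qed
  moreover have "bounded (range (\<lambda>k. integral {a..} (g k)))"
  proof -
    have "0 \<le> integral {a..a + real k} f" for k
      by (rule integral_nonneg[OF \<open>f integrable_on {a..a + real k}\<close>]) (auto intro: nonneg)
    then have "\<bar>integral {a..a + real k} f\<bar> \<le> M" for k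
      using bounded[of "a + real k"] by simp
    then show ?thesis unfolding bounded_iff integral_g by auto
  qed
  ultimately have lim:
      "f integrable_on {a..} \<and> (\<lambda>k. integral {a..} (g k)) \<longlonglongrightarrow> integral {a..} f"
    by (intro monotone_convergence_increasing integrable_g) auto
  then show "f integrable_on {a..}" by blast
  show "integral {a..} f \<le> M"
    by (rule tendsto_upperbound[OF lim[THEN conjunct2]])
      (auto simp: integral_g intro!: always_eventually bounded)
qed

lemma
  fixes f :: "real \<Rightarrow> real"
  assumes "continuous_on {t..} f" "t \<le> u" "f integrable_on {u..}"
  shows integrable_Ici_combine: "f integrable_on {t..}"
    and integral_Ici_combine: "integral {t..} f = integral {t..u} f + integral {u..} f"
proof -
  have "(f has_integral integral {t..u} f) {t..u}"
    by (rule integrable_integral, rule integrable_continuous_interval,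
        rule continuous_on_subset[OF assms(1)]) auto
  then have "(f has_integral (integral {t..u} f + integral {u..} f)) ({t..u} \<union> {u..})"
    using assms(3) by (intro has_integral_Un) (auto intro: negligible_subset[OF negligible_sing[of u]])
  moreover have "{t..u} \<union> {u..} = {t..}" using assms(2) by auto
  ultimately show "f integrable_on {t..}" "integral {t..} f = integral {t..u} f + integral {u..} f"
    by (auto simp: has_integral_iff)
qed

lemma DERIV_within_nonpos_imp_nonincreasing:
  fixes f f' :: "real \<Rightarrow> real"
  assumes "c \<le> d"
    and "\<And>x. x \<in> {c..d} \<Longrightarrow> (f has_real_derivative f' x) (at x within {c..d})"
    and "\<And>x. x \<in> {c..d} \<Longrightarrow> f' x \<le> 0"
  shows "f d \<le> f c"
proof -
  have "(f' has_integral (f d - f c)) {c..d}"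
    using assms(1,2) by (intro fundamental_theorem_of_calculus)
      (auto simp: has_real_derivative_iff_has_vector_derivative[symmetric])
  then have "f d - f c \<le> 0"
    using has_integral_le[OF _ has_integral_0] assms(3) by blast
  then show ?thesis by simp
qed

lemma antimono_on_open_interval_bounds:
  fixes f :: "real \<Rightarrow> real"
  assumes "continuous_on {a..c} f" "a < x" "x < c"
    and antimono: "\<And>y z. a < y \<Longrightarrow> y \<le> z \<Longrightarrow> z < c \<Longrightarrow> f z \<le> f y"
  shows "f c \<le> f x" and "f x \<le> f a"
proof -
  have "a < c" using assms(2,3) by simp
  have "\<forall>\<^sub>F y in at_left c. f y \<le> f x"
    unfolding eventually_at_left_field using assms(2,3) antimono by (intro exI[of _ x]) auto
  with continuous_on_Icc_at_leftD[OF assms(1) \<open>a < c\<close>] show "f c \<le> f x"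
    by (rule tendsto_upperbound) simp
  have "\<forall>\<^sub>F y in at_right a. f x \<le> f y"
    unfolding eventually_at_right_field using assms(2,3) antimono by (intro exI[of _ x]) auto
  with continuous_on_Icc_at_rightD[OF assms(1) \<open>a < c\<close>] show "f x \<le> f a"
    by (rule tendsto_lowerbound) simp
qed

lemma at_within_Ici_eq_at: "a < x \<Longrightarrow> at x within {a..} = at (x::real)"
  by (rule at_within_nhd[where S="{a<..}"]) auto

lemma
  fixes f f' f'' :: "real \<Rightarrow> real"
  assumes "0 < d" and const: "\<And>y. \<bar>y - s\<bar> < d \<Longrightarrow> f y = c"
    and f': "\<And>y. \<bar>y - s\<bar> < d \<Longrightarrow> (f has_real_derivative f' y) (at y)"
    and f'': "(f' has_real_derivative f'' s) (at s)"
  shows derivative_eq_0_where_locally_const: "f' s = 0"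
    and second_derivative_eq_0_where_locally_const: "f'' s = 0"
proof -
  have f'_eq_0: "f' y = 0" if y: "\<bar>y - s\<bar> < d" for y
  proof (rule DERIV_local_const[OF f'[OF y]])
    show "0 < d - \<bar>y - s\<bar>" using y by simp
    show "\<forall>z. \<bar>y - z\<bar> < d - \<bar>y - s\<bar> \<longrightarrow> f y = f z"
    proof (intro allI impI)
      fix z assume "\<bar>y - z\<bar> < d - \<bar>y - s\<bar>"
      then have "\<bar>z - s\<bar> < d" by linarith
      then show "f y = f z" using const y by simp
    qed
  qed
  then show "f' s = 0" using \<open>0 < d\<close> by simp
  show "f'' s = 0"
    by (rule DERIV_local_const[OF f'' \<open>0 < d\<close>]) (auto simp: f'_eq_0 abs_minus_commute \<open>0 < d\<close>)
qed

lemma has_real_derivative_powr_mult_at_zero: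
  fixes f g :: "real \<Rightarrow> real"
  assumes "(f \<longlongrightarrow> 0) (at s)" "\<forall>\<^sub>F y in at s. 0 \<le> f y" "0 < r"
    and "(g has_real_derivative g') (at s)" "g s = 0"
  shows "((\<lambda>y. f y powr r * g y) has_real_derivative 0) (at s)"
proof -
  have "((\<lambda>y. f y powr r * ((g y - g s) / (y - s))) \<longlongrightarrow> 0 * g') (at s)"
    using assms by (intro tendsto_mult tendsto_zero_powrI) (auto simp: has_field_derivative_iff)
  then show ?thesis using assms(5) by (simp add: has_field_derivative_iff)
qed

lemma vector_derivative_within_Ici:
  fixes f :: "real \<Rightarrow> real"
  assumes "a \<le> t" "(f has_real_derivative D) (at t within {a..})"
  shows "vector_derivative f (at t within {a..}) = D"
proof (rule vector_derivative_within)
  show "at t within {a..} \<noteq> bot"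
  proof (cases "t = a")
    case True then show ?thesis by (simp add: at_within_Ici_at_right)
  next
    case False then show ?thesis using assms(1) at_within_Ici_eq_at by simp
  qed
  show "(f has_vector_derivative D) (at t within {a..})"
    using assms(2) by (simp add: has_real_derivative_iff_has_vector_derivative)
qed

lemma abs_mult_add_mult_le:
  fixes a c u v :: real
  assumes "\<bar>a\<bar> \<le> k" "\<bar>c\<bar> \<le> k" "\<bar>u\<bar> \<le> U" "\<bar>v\<bar> \<le> V"
  shows "\<bar>a * u + c * v\<bar> \<le> k * (U + V)"
proof -
  have "\<bar>a * u\<bar> \<le> k * U" "\<bar>c * v\<bar> \<le> k * V"
    unfolding abs_mult using assms by (auto intro!: mult_mono)
  then show ?thesis using abs_triangle_ineq[of "a * u" "c * v"] by (simp add: distrib_left)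
qed

lemma norm_add_axis_square:
  fixes x :: "real ^ 'n"
  shows "(norm (x + r *\<^sub>R axis i 1))\<^sup>2 = (norm x)\<^sup>2 + 2 * x $ i * r + r\<^sup>2"
  unfolding power2_norm_eq_inner
  by (simp add: inner_add_left inner_add_right inner_axis inner_axis' inner_commute
      algebra_simps power2_eq_square)

lemma norm_square_eq_sum_components:
  fixes x :: "real ^ 'n"
  shows "(norm x)\<^sup>2 = (\<Sum>i\<in>UNIV. (x $ i)\<^sup>2)"
  unfolding power2_norm_eq_inner inner_vec_def by (simp add: power2_eq_square)

section \<open>The function \<open>\<Phi>\<close>\<close>

locale damping =
  fixes b b' :: "real \<Rightarrow> real"
  assumes b_deriv: "\<forall>t\<ge>0. (b has_real_derivative b' t) (at t within {0..})"
    and b_pos: "\<forall>t\<ge>0. b t > 0"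
    and b_limsup: "Limsup at_top (\<lambda>t. ereal (\<bar>b' t\<bar> / (b t)\<^sup>2)) < 1"
begin

abbreviation E :: "real \<Rightarrow> real" where
  "E t \<equiv> exp (- integral {0..t} b)"

lemma continuous_on_b: "continuous_on {0..} b"
  using b_deriv by (intro continuous_on_Ici_if_has_derivative[of 0 b b']) simp

lemma E_deriv: "0 \<le> t \<Longrightarrow> (E has_real_derivative - b t * E t) (at t within {0..})"
  using DERIV_chain2[OF DERIV_exp DERIV_minus[OF has_real_derivative_integral_Ici[OF continuous_on_b]]]
  by (simp add: mult.commute)

lemma continuous_on_E: "continuous_on {0..} E"
  by (rule continuous_on_Ici_if_has_derivative[OF E_deriv])

lemma eventually_b_ratio_bound: "\<exists>\<theta><1. \<exists>T\<ge>0. \<forall>t\<ge>T. \<bar>b' t\<bar> / (b t)\<^sup>2 \<le> \<theta>"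
proof -
  obtain \<theta> where \<theta>: "Limsup at_top (\<lambda>t. ereal (\<bar>b' t\<bar> / (b t)\<^sup>2)) < ereal \<theta>" "\<theta> < 1"
    using ereal_dense2[OF b_limsup] by auto
  then have "\<forall>\<^sub>F t in at_top. ereal (\<bar>b' t\<bar> / (b t)\<^sup>2) < ereal \<theta>"
    by (intro Limsup_lessD)
  then obtain T where "\<forall>t\<ge>T. \<bar>b' t\<bar> / (b t)\<^sup>2 < \<theta>"
    by (auto simp: eventually_at_top_linorder)
  with \<theta>(2) show ?thesis
    by (intro exI[of _ \<theta>] conjI exI[of _ "max T 0"]) (auto intro: less_imp_le)
qed

text \<open>Where the ratio bound holds, \<open>E / b + (1 - \<theta>) \<integral> E\<close> is nonincreasing:
  its derivative is \<open>- E (\<theta> + b' / b\<^sup>2) \<le> 0\<close>.\<close>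
lemma integral_E_le:
  assumes ratio: "\<forall>s\<ge>T. \<bar>b' s\<bar> / (b s)\<^sup>2 \<le> \<theta>" and "0 \<le> T" "T \<le> t" "t \<le> S"
  shows "(1 - \<theta>) * integral {t..S} E \<le> E t / b t"
proof -
  define h where "h s = E s / b s + (1 - \<theta>) * integral {t..s} E" for s
  define h' where "h' s = - E s * (\<theta> + b' s / (b s)\<^sup>2)" for s
  have "h S \<le> h t"
  proof (rule DERIV_within_nonpos_imp_nonincreasing[where f = h and f' = h' and c = t and d = S])
    fix s assume s: "s \<in> {t..S}"
    then have "0 \<le> s" "b s > 0" using assms b_pos by auto
    have "continuous_on {t..S} E"
      using continuous_on_E by (rule continuous_on_subset) (use assms in auto)
    then have integral_deriv:
        "((\<lambda>s. integral {t..s} E) has_real_derivative E s) (at s within {t..S})"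
      using integral_has_real_derivative s by blast
    have quotient_deriv: "((\<lambda>s. E s / b s) has_real_derivative
        (- b s * E s * b s - E s * b' s) / (b s * b s)) (at s within {t..S})"
      using E_deriv[OF \<open>0 \<le> s\<close>] b_deriv \<open>0 \<le> s\<close> \<open>b s > 0\<close> assms
      by (intro DERIV_divide) (auto intro: DERIV_subset)
    have "(h has_real_derivative
        (- b s * E s * b s - E s * b' s) / (b s * b s) + (1 - \<theta>) * E s) (at s within {t..S})"
      unfolding h_def by (rule DERIV_add[OF quotient_deriv DERIV_cmult[OF integral_deriv]])
    moreover have "(- b s * E s * b s - E s * b' s) / (b s * b s) + (1 - \<theta>) * E s = h' s"
      unfolding h'_def using \<open>b s > 0\<close> by (simp add: field_simps power2_eq_square)
    ultimately show "(h has_real_derivative h' s) (at s within {t..S})" by simp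
    have "\<bar>b' s / (b s)\<^sup>2\<bar> \<le> \<theta>" using ratio s assms by simp
    then have "- \<theta> \<le> b' s / (b s)\<^sup>2" by linarith
    then show "h' s \<le> 0" unfolding h'_def by (simp add: mult_nonneg_nonneg)
  qed (use assms in auto)
  moreover have "0 < E S / b S" using b_pos assms by auto
  ultimately show ?thesis by (simp add: h_def)
qed

lemma E_tail_bound:
  "\<exists>T\<ge>0. \<exists>M. \<forall>u\<ge>T. E integrable_on {u..} \<and> b u * integral {u..} E \<le> M * E u"
proof -
  obtain \<theta> T where \<theta>: "\<theta> < 1" and "0 \<le> T" and ratio: "\<forall>s\<ge>T. \<bar>b' s\<bar> / (b s)\<^sup>2 \<le> \<theta>"
    using eventually_b_ratio_bound by blast
  have "E integrable_on {u..} \<and> b u * integral {u..} E \<le> 1 / (1 - \<theta>) * E u"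
    if "T \<le> u" for u
  proof -
    have cont: "continuous_on {u..} E"
      using continuous_on_E by (rule continuous_on_subset) (use \<open>0 \<le> T\<close> that in auto)
    have bound: "integral {u..S} E \<le> E u / b u / (1 - \<theta>)" if "u \<le> S" for S
      using integral_E_le[OF ratio \<open>0 \<le> T\<close> \<open>T \<le> u\<close> that] \<theta>
      by (metis diff_gt_0_iff_gt mult.commute pos_le_divide_eq)
    have "E integrable_on {u..}"
      by (rule integrable_Ici_if_integrals_bounded[OF cont _ bound]) simp_all
    moreover have "integral {u..} E \<le> E u / b u / (1 - \<theta>)"
      by (rule integral_Ici_le_if_integrals_bounded[OF cont _ bound]) simp_all
    moreover have "0 < b u" using b_pos \<open>0 \<le> T\<close> that by simp
    ultimately show ?thesis using \<theta> by (simp add: pos_le_divide_eq mult_ac)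
  qed
  with \<open>0 \<le> T\<close> show ?thesis by blast
qed

lemma integrable_E_Ici: "0 \<le> t \<Longrightarrow> E integrable_on {t..}"
proof -
  assume "0 \<le> t"
  obtain T where "0 \<le> T" and tail: "\<forall>u\<ge>T. E integrable_on {u..}"
    using E_tail_bound by blast
  have "continuous_on {t..} E"
    using continuous_on_E by (rule continuous_on_subset) (use \<open>0 \<le> t\<close> in auto)
  then show ?thesis
    using tail integrable_Ici_combine[of t E "max t T"] by simp
qed

lemma Phi_eq: "0 \<le> t \<Longrightarrow> Phi b t = integral {t..} E / E t"
proof -
  assume "0 \<le> t"
  have "exp (- integral {t..s} b) = E s / E t" if "t \<le> s" for s
  proof -
    have "b integrable_on {0..s}"
      by (rule integrable_continuous_interval, rule continuous_on_subset[OF continuous_on_b]) auto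
    then have "integral {0..s} b = integral {0..t} b + integral {t..s} b"
      using Henstock_Kurzweil_Integration.integral_combine \<open>0 \<le> t\<close> that by metis
    then show ?thesis by (simp add: exp_diff[symmetric])
  qed
  then have "Phi b t = integral {t..} (\<lambda>s. E s / E t)"
    unfolding Phi_def by (intro integral_cong) auto
  then show ?thesis by simp
qed

lemma tail_integral_E_deriv:
  assumes "0 \<le> t"
  shows "((\<lambda>u. integral {u..} E) has_real_derivative - E t) (at t within {0..})"
proof -
  have "((\<lambda>u. integral {0..} E - integral {0..u} E) has_real_derivative 0 - E t)
      (at t within {0..})"
    by (intro DERIV_diff DERIV_const has_real_derivative_integral_Ici[OF continuous_on_E assms])
  moreover have "integral {0..} E - integral {0..u} E = integral {u..} E" if "0 \<le> u" for u
    using integral_Ici_combine[OF continuous_on_E that integrable_E_Ici[OF that]] by simp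
  ultimately show ?thesis
    using has_field_derivative_transform_within[where d = 1] assms by fastforce
qed

lemma Phi_deriv: "0 \<le> t \<Longrightarrow> (Phi b has_real_derivative b t * Phi b t - 1) (at t within {0..})"
proof -
  assume "0 \<le> t"
  have "((\<lambda>u. integral {u..} E / E u) has_real_derivative
      (- E t * E t - integral {t..} E * (- b t * E t)) / (E t * E t)) (at t within {0..})"
    by (intro DERIV_divide tail_integral_E_deriv E_deriv \<open>0 \<le> t\<close>) simp
  moreover have "(- E t * E t - integral {t..} E * (- b t * E t)) / (E t * E t)
      = b t * Phi b t - 1"
    using Phi_eq[OF \<open>0 \<le> t\<close>] by (simp add: field_simps)
  ultimately show ?thesis
    using has_field_derivative_transform_within[where d = 1] \<open>0 \<le> t\<close> Phi_eq by fastforce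
qed

lemma continuous_on_Phi: "continuous_on {0..} (Phi b)"
  by (rule continuous_on_Ici_if_has_derivative[OF Phi_deriv])

lemma Phi_nonneg: "0 \<le> t \<Longrightarrow> 0 \<le> Phi b t"
  using Phi_eq integral_nonneg[OF integrable_E_Ici] by simp

lemma integral_Phi_nonneg: "0 \<le> t \<Longrightarrow> 0 \<le> integral {0..t} (Phi b)"
  by (rule integral_nonneg, rule integrable_continuous_interval,
      rule continuous_on_subset[OF continuous_on_Phi]) (auto intro: Phi_nonneg)

lemma b_Phi_bounded: "\<exists>L>0. \<forall>t\<ge>0. \<bar>b t * Phi b t - 1\<bar> \<le> L"
proof -
  obtain T M where "0 \<le> T" and tail: "\<forall>u\<ge>T. b u * integral {u..} E \<le> M * E u"
    using E_tail_bound by blast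
  have "continuous_on {0..T} (\<lambda>t. b t * Phi b t)"
    by (intro continuous_intros; rule continuous_on_subset[OF continuous_on_b]
        continuous_on_subset[OF continuous_on_Phi]) auto
  then have "compact ((\<lambda>t. b t * Phi b t) ` {0..T})"
    by (rule compact_continuous_image) simp
  then obtain K where K: "\<forall>y\<in>(\<lambda>t. b t * Phi b t) ` {0..T}. norm y \<le> K"
    using compact_imp_bounded bounded_iff by metis
  have "b t * Phi b t \<le> max K M" if "0 \<le> t" for t
  proof (cases "t \<le> T")
    case True
    then have "norm (b t * Phi b t) \<le> K" using K that by simp
    then show ?thesis by (simp add: abs_le_iff le_max_iff_disj)
  next
    case False
    then have "b t * integral {t..} E \<le> M * E t" using tail by simp
    then have "b t * Phi b t \<le> M" using Phi_eq[OF that] by (simp add: divide_le_eq)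
    then show ?thesis by simp
  qed
  moreover have "0 \<le> b t * Phi b t" if "0 \<le> t" for t
    using b_pos Phi_nonneg that by (simp add: less_imp_le)
  ultimately have "\<bar>b t * Phi b t - 1\<bar> \<le> max 0 (max K M) + 1" if "0 \<le> t" for t
    using that by (fastforce simp: abs_le_iff)
  moreover have "0 < max 0 (max K M) + 1" by simp
  ultimately show ?thesis by blast
qed

text \<open>The function \<open>\<Phi>\<^sup>2 - 2 L \<integral>\<^sub>0\<^sup>t \<Phi>\<close> has derivative
  \<open>2 \<Phi> (b \<Phi> - 1 - L) \<le> 0\<close>.\<close>
lemma Phi_square_le:
  assumes L: "\<forall>t\<ge>0. \<bar>b t * Phi b t - 1\<bar> \<le> L" and "0 \<le> t"
  shows "(Phi b t)\<^sup>2 \<le> (Phi b 0)\<^sup>2 + 2 * L * integral {0..t} (Phi b)"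
proof -
  define h where "h u = (Phi b u)\<^sup>2 - 2 * L * integral {0..u} (Phi b)" for u
  define h' where "h' u = 2 * Phi b u * (b u * Phi b u - 1) - 2 * L * Phi b u" for u
  have "h t \<le> h 0"
  proof (rule DERIV_within_nonpos_imp_nonincreasing[where f = h and f' = h' and c = 0 and d = t])
    fix u assume u: "u \<in> {0..t}"
    have "((\<lambda>u. (Phi b u)\<^sup>2) has_real_derivative 2 * (b u * Phi b u - 1) * Phi b u)
        (at u within {0..})"
      using DERIV_power[OF Phi_deriv, of u 2] u by (simp add: algebra_simps)
    then have "(h has_real_derivative
        2 * (b u * Phi b u - 1) * Phi b u - 2 * L * Phi b u) (at u within {0..})"
      unfolding h_def using u
      by (intro DERIV_diff DERIV_cmult has_real_derivative_integral_Ici[OF continuous_on_Phi]) auto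
    then have "(h has_real_derivative h' u) (at u within {0..})"
      unfolding h'_def by (simp add: algebra_simps)
    then show "(h has_real_derivative h' u) (at u within {0..t})"
      by (rule DERIV_subset) auto
    have "b u * Phi b u - 1 \<le> L" using L u by (simp add: abs_le_iff)
    then have "Phi b u * (b u * Phi b u - 1) \<le> Phi b u * L"
      using Phi_nonneg u by (simp add: mult_left_mono)
    then show "h' u \<le> 0" unfolding h'_def by (simp add: mult.commute)
  qed (use assms in simp)
  then show ?thesis unfolding h_def by simp
qed

lemma Phi_square_bound: "\<exists>C\<ge>0. \<forall>t\<ge>0. (Phi b t)\<^sup>2 \<le> C * (1 + integral {0..t} (Phi b))"
proof -
  obtain L where "0 < L" and L: "\<forall>t\<ge>0. \<bar>b t * Phi b t - 1\<bar> \<le> L"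
    using b_Phi_bounded by blast
  have "(Phi b t)\<^sup>2 \<le> ((Phi b 0)\<^sup>2 + 2 * L) * (1 + integral {0..t} (Phi b))" if "0 \<le> t" for t
  proof -
    have "0 \<le> (Phi b 0)\<^sup>2 * integral {0..t} (Phi b)"
      using integral_Phi_nonneg[OF that] by simp
    with Phi_square_le[OF L that] \<open>0 < L\<close> show ?thesis by (simp add: algebra_simps)
  qed
  moreover have "0 \<le> (Phi b 0)\<^sup>2 + 2 * L" using \<open>0 < L\<close> by simp
  ultimately show ?thesis by blast
qed

end

section \<open>Powers of the cutoff function\<close>

locale cutoff =
  fixes \<eta> \<eta>' \<eta>'' :: "real \<Rightarrow> real" and q :: real
  assumes q_gt_2: "q > 2"
    and eta_deriv: "\<forall>s\<ge>0. (\<eta> has_real_derivative \<eta>' s) (at s within {0..})"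
    and eta'_deriv: "\<forall>s\<ge>0. (\<eta>' has_real_derivative \<eta>'' s) (at s within {0..})"
    and eta''_cont: "continuous_on {0..} \<eta>''"
    and eta_one: "\<forall>s. 0 \<le> s \<and> s \<le> 1/2 \<longrightarrow> \<eta> s = 1"
    and eta_decr: "\<forall>s t. 1/2 < s \<and> s \<le> t \<and> t < 1 \<longrightarrow> \<eta> t \<le> \<eta> s"
    and eta_zero: "\<forall>s\<ge>1. \<eta> s = 0"
begin

lemma eta_DERIV: "0 < s \<Longrightarrow> (\<eta> has_real_derivative \<eta>' s) (at s)"
  using eta_deriv at_within_Ici_eq_at by (metis less_imp_le)

lemma eta'_DERIV: "0 < s \<Longrightarrow> (\<eta>' has_real_derivative \<eta>'' s) (at s)"
  using eta'_deriv at_within_Ici_eq_at by (metis less_imp_le)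

lemma continuous_on_eta: "continuous_on {0..} \<eta>"
  using eta_deriv by (intro continuous_on_Ici_if_has_derivative[of 0 \<eta> \<eta>']) simp

lemma continuous_on_eta': "continuous_on {0..} \<eta>'"
  using eta'_deriv by (intro continuous_on_Ici_if_has_derivative[of 0 \<eta>' \<eta>'']) simp

lemma eta_nonneg: "0 \<le> s \<Longrightarrow> 0 \<le> \<eta> s"
  and eta_le_1: "0 \<le> s \<Longrightarrow> \<eta> s \<le> 1"
proof -
  assume "0 \<le> s"
  have "continuous_on {1/2..1} \<eta>"
    using continuous_on_eta by (rule continuous_on_subset) auto
  then have "1/2 < s \<Longrightarrow> s < 1 \<Longrightarrow> \<eta> 1 \<le> \<eta> s \<and> \<eta> s \<le> \<eta> (1/2)"
    using antimono_on_open_interval_bounds[of "1/2" 1 \<eta> s] eta_decr by auto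
  then have "0 \<le> \<eta> s \<and> \<eta> s \<le> 1"
    using eta_one eta_zero \<open>0 \<le> s\<close> by (cases "s \<le> 1/2"; cases "1 \<le> s") auto
  then show "0 \<le> \<eta> s" "\<eta> s \<le> 1" by auto
qed

lemma eta_derivs_vanish:
  assumes "0 < s" "s < 1/2 \<or> 1 < s"
  shows "\<eta>' s = 0" "\<eta>'' s = 0"
proof -
  obtain d c where "0 < d" "\<And>y. \<bar>y - s\<bar> < d \<Longrightarrow> 0 < y \<and> \<eta> y = c"
  proof (cases "s < 1/2")
    case True
    then show ?thesis
      using that[of "min s (1/2 - s)" 1] \<open>0 < s\<close> eta_one by (auto simp: abs_less_iff)
  next
    case False
    then show ?thesis
      using that[of "s - 1" 0] assms eta_zero by (auto simp: abs_less_iff)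
  qed
  then show "\<eta>' s = 0" "\<eta>'' s = 0"
    using derivative_eq_0_where_locally_const[of d s \<eta> c \<eta>' \<eta>'']
      second_derivative_eq_0_where_locally_const[of d s \<eta> c \<eta>' \<eta>'']
      eta_DERIV eta'_DERIV \<open>0 < s\<close> by auto
qed

lemma eta'_eq_0_at_zero: "0 < s \<Longrightarrow> \<eta> s = 0 \<Longrightarrow> \<eta>' s = 0"
  by (rule DERIV_local_min[OF eta_DERIV, of s s]) (auto intro: eta_nonneg)

lemma eta_derivs_bounded: "\<exists>M. \<forall>s>0. \<bar>\<eta>' s\<bar> \<le> M \<and> \<bar>\<eta>'' s\<bar> \<le> M"
proof -
  have "compact (\<eta>' ` {0..1})" "compact (\<eta>'' ` {0..1})"
    by (intro compact_continuous_image continuous_on_subset[OF continuous_on_eta']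
        continuous_on_subset[OF eta''_cont]; auto)+
  then obtain M1 M2 where "\<forall>y\<in>\<eta>' ` {0..1}. norm y \<le> M1" "\<forall>y\<in>\<eta>'' ` {0..1}. norm y \<le> M2"
    using compact_imp_bounded bounded_iff by metis
  then have "\<bar>\<eta>' s\<bar> \<le> max 0 (max M1 M2) \<and> \<bar>\<eta>'' s\<bar> \<le> max 0 (max M1 M2)" if "0 < s" for s
    using eta_derivs_vanish[OF that] that by (cases "s \<le> 1") (auto simp: le_max_iff_disj)
  then show ?thesis by blast
qed

definition G :: "real \<Rightarrow> real" where
  "G s = \<eta> s powr q"

definition G' :: "real \<Rightarrow> real" where
  "G' s = q * \<eta> s powr (q - 1) * \<eta>' s"

definition G'' :: "real \<Rightarrow> real" where
  "G'' s = q * (q - 1) * \<eta> s powr (q - 2) * (\<eta>' s)\<^sup>2 + q * \<eta> s powr (q - 1) * \<eta>'' s"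

lemma eta_tendsto_nonneg_at:
  assumes "0 < s"
  shows "(\<eta> \<longlongrightarrow> \<eta> s) (at s)" "\<forall>\<^sub>F y in at s. 0 \<le> \<eta> y"
proof -
  show "(\<eta> \<longlongrightarrow> \<eta> s) (at s)"
    using eta_DERIV[OF assms] DERIV_isCont isCont_def by blast
  show "\<forall>\<^sub>F y in at s. 0 \<le> \<eta> y"
    unfolding eventually_at using assms
    by (intro exI[of _ s]) (auto intro!: eta_nonneg simp: dist_real_def)
qed

text \<open>At a zero of \<open>\<eta>\<close>, a minimum, also \<open>\<eta>'\<close> vanishes, and the factor \<open>\<eta>\<^sup>q\<^sup>-\<^sup>1\<close>
  drives the difference quotients of \<open>G\<close> and \<open>G'\<close> to 0.\<close>
lemma G_deriv:
  assumes "0 < s"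
  shows "(G has_real_derivative G' s) (at s)"
proof (cases "\<eta> s = 0")
  case True
  have "\<forall>\<^sub>F y in nhds s. \<eta> y powr (q - 1) * \<eta> y = G y"
    unfolding eventually_nhds_metric G_def using assms
    by (intro exI[of _ s]) (auto simp: dist_real_def powr_mult_base eta_nonneg mult.commute)
  moreover have "((\<lambda>y. \<eta> y powr (q - 1) * \<eta> y) has_real_derivative 0) (at s)"
    using eta_tendsto_nonneg_at[OF assms] q_gt_2 True
    by (intro has_real_derivative_powr_mult_at_zero[OF _ _ _ eta_DERIV[OF assms]]) auto
  ultimately show ?thesis
    using DERIV_cong_ev True eta'_eq_0_at_zero[OF assms] unfolding G'_def by fastforce
next
  case False
  then have "0 < \<eta> s" using eta_nonneg assms by (simp add: less_le)
  then show ?thesis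
    using DERIV_fun_powr[OF eta_DERIV[OF assms], of q] unfolding G_def G'_def by simp
qed

lemma G'_deriv:
  assumes "0 < s"
  shows "(G' has_real_derivative G'' s) (at s)"
proof (cases "\<eta> s = 0")
  case True
  have "G' = (\<lambda>y. \<eta> y powr (q - 1) * (q * \<eta>' y))"
    unfolding G'_def by (simp add: fun_eq_iff mult_ac)
  moreover have "((\<lambda>y. \<eta> y powr (q - 1) * (q * \<eta>' y)) has_real_derivative 0) (at s)"
    using eta_tendsto_nonneg_at[OF assms] q_gt_2 True eta'_eq_0_at_zero[OF assms]
    by (intro has_real_derivative_powr_mult_at_zero[OF _ _ _ DERIV_cmult[OF eta'_DERIV[OF assms]]])
      auto
  moreover have "G'' s = 0"
    unfolding G''_def using True q_gt_2 by simp
  ultimately show ?thesis by simp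
next
  case False
  then have "0 < \<eta> s" using eta_nonneg assms by (simp add: less_le)
  have "((\<lambda>y. q * \<eta> y powr (q - 1) * \<eta>' y) has_real_derivative
      q * ((q - 1) * \<eta> s powr (q - 1 - of_nat 1) * \<eta>' s) * \<eta>' s
        + \<eta>'' s * (q * \<eta> s powr (q - 1))) (at s)"
    using DERIV_mult[OF DERIV_cmult[OF DERIV_fun_powr[OF eta_DERIV[OF assms] \<open>0 < \<eta> s\<close>]]
        eta'_DERIV[OF assms]] .
  then show ?thesis
    unfolding G'_def G''_def by (simp add: power2_eq_square algebra_simps)
qed

lemma
  assumes "0 < s" "\<bar>\<eta>' s\<bar> \<le> M" "\<bar>\<eta>'' s\<bar> \<le> M"
  shows G'_le: "\<bar>G' s\<bar> \<le> q * M * eta_star \<eta> s powr (q - 2)"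
    and G''_le: "\<bar>G'' s\<bar> \<le> (q * (q - 1) * M\<^sup>2 + q * M) * eta_star \<eta> s powr (q - 2)"
proof -
  have "0 \<le> M" using assms(2) by linarith
  have "\<bar>G' s\<bar> \<le> q * M * eta_star \<eta> s powr (q - 2)
    \<and> \<bar>G'' s\<bar> \<le> (q * (q - 1) * M\<^sup>2 + q * M) * eta_star \<eta> s powr (q - 2)"
  proof (cases "s < 1/2")
    case True
    then show ?thesis
      using eta_derivs_vanish[OF assms(1)] unfolding G'_def G''_def eta_star_def by simp
  next
    case False
    define e where "e = \<eta> s"
    have "0 \<le> e" "e \<le> 1" unfolding e_def using eta_nonneg eta_le_1 assms(1) by auto
    then have e_powr: "e powr (q - 1) \<le> e powr (q - 2)" by (intro powr_mono') auto
    have "(\<eta>' s)\<^sup>2 \<le> M\<^sup>2"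
      using assms(2) \<open>0 \<le> M\<close> by (metis abs_le_square_iff abs_of_nonneg)
    have "\<bar>G' s\<bar> = q * e powr (q - 1) * \<bar>\<eta>' s\<bar>"
      unfolding G'_def e_def using q_gt_2 by (simp add: abs_mult)
    also have "\<dots> \<le> q * e powr (q - 2) * M"
      using q_gt_2 e_powr assms(2) by (intro mult_mono mult_left_mono) auto
    finally have "\<bar>G' s\<bar> \<le> q * M * eta_star \<eta> s powr (q - 2)"
      using False unfolding eta_star_def e_def by (simp add: mult_ac)
    have "\<bar>G'' s\<bar>
        \<le> q * (q - 1) * e powr (q - 2) * (\<eta>' s)\<^sup>2 + q * e powr (q - 1) * \<bar>\<eta>'' s\<bar>"
      unfolding G''_def e_def using q_gt_2
      by (auto simp: abs_mult intro!: abs_triangle_ineq[THEN order_trans])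
    also have "\<dots> \<le> q * (q - 1) * e powr (q - 2) * M\<^sup>2 + q * e powr (q - 2) * M"
      using q_gt_2 e_powr \<open>(\<eta>' s)\<^sup>2 \<le> M\<^sup>2\<close> assms(3)
      by (intro add_mono mult_mono mult_left_mono) auto
    finally have "\<bar>G'' s\<bar> \<le> (q * (q - 1) * M\<^sup>2 + q * M) * eta_star \<eta> s powr (q - 2)"
      using False unfolding eta_star_def e_def by (simp add: algebra_simps)
    with \<open>\<bar>G' s\<bar> \<le> q * M * eta_star \<eta> s powr (q - 2)\<close> show ?thesis ..
  qed
  then show "\<bar>G' s\<bar> \<le> q * M * eta_star \<eta> s powr (q - 2)"
    and "\<bar>G'' s\<bar> \<le> (q * (q - 1) * M\<^sup>2 + q * M) * eta_star \<eta> s powr (q - 2)"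
    by simp_all
qed

lemma G'_G''_bounds:
  "\<exists>K>0. \<forall>s>0. \<bar>G' s\<bar> \<le> K * eta_star \<eta> s powr (q - 2)
    \<and> \<bar>G'' s\<bar> \<le> K * eta_star \<eta> s powr (q - 2)"
proof -
  obtain M where M: "\<forall>s>0. \<bar>\<eta>' s\<bar> \<le> M \<and> \<bar>\<eta>'' s\<bar> \<le> M"
    using eta_derivs_bounded by blast
  then have "\<bar>\<eta>' 1\<bar> \<le> M" by simp
  then have "0 \<le> M" by linarith
  define K where "K = q * (q - 1) * M\<^sup>2 + q * M + 1"
  have "0 \<le> q * (q - 1) * M\<^sup>2" "0 \<le> q * M" using q_gt_2 \<open>0 \<le> M\<close> by simp_all
  then have "0 < K" "q * M \<le> K" "q * (q - 1) * M\<^sup>2 + q * M \<le> K" unfolding K_def by linarith+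
  then have "\<bar>G' s\<bar> \<le> K * eta_star \<eta> s powr (q - 2)
      \<and> \<bar>G'' s\<bar> \<le> K * eta_star \<eta> s powr (q - 2)" if "0 < s" for s
  proof -
    have "q * M * eta_star \<eta> s powr (q - 2) \<le> K * eta_star \<eta> s powr (q - 2)"
      and "(q * (q - 1) * M\<^sup>2 + q * M) * eta_star \<eta> s powr (q - 2)
        \<le> K * eta_star \<eta> s powr (q - 2)"
      using \<open>q * M \<le> K\<close> \<open>q * (q - 1) * M\<^sup>2 + q * M \<le> K\<close>
      by (simp_all add: mult_right_mono)
    then show ?thesis using G'_le[OF that] G''_le[OF that] M that by force
  qed
  with \<open>0 < K\<close> show ?thesis by blast
qed

end

section \<open>The test functions \<open>\<psi>\<^sub>R\<close>\<close>

locale test_function = damping b b' + cutoff \<eta> \<eta>' \<eta>'' "2 * conj_exp p"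
  for b b' \<eta> \<eta>' \<eta>'' :: "real \<Rightarrow> real" and p :: real +
  assumes p_gt_1: "p > 1"
begin

lemma powr_psiR_star:
  "psiR_star b \<eta> p R x t powr (1/p) = eta_star \<eta> (sR b R x t) powr (2 * conj_exp p - 2)"
proof -
  have "2 * conj_exp p * (1/p) = 2 * conj_exp p - 2"
    unfolding conj_exp_def using p_gt_1 by (simp add: field_simps)
  then show ?thesis unfolding psiR_star_def powr_powr by simp
qed

lemma psiR_eq_G: "psiR b \<eta> p R x t = G (sR b R x t)"
  unfolding psiR_def G_def ..

lemma sR_pos: "0 < R \<Longrightarrow> 0 \<le> t \<Longrightarrow> 0 < sR b R x t"
  unfolding sR_def Qty_def using integral_Phi_nonneg[of t] by (simp add: add_pos_nonneg)

lemma inP_bounds: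
  "inP b R x t \<Longrightarrow> 0 \<le> t \<and> (norm x)\<^sup>2 \<le> R \<and> 1 + integral {0..t} (Phi b) \<le> R"
  unfolding inP_def Qty_def using integral_Phi_nonneg[of t] zero_le_power2[of "norm x"]
  by linarith

lemma sR_deriv:
  "0 \<le> t \<Longrightarrow> ((\<lambda>\<tau>. sR b R x \<tau>) has_real_derivative Phi b t / R) (at t within {0..})"
  unfolding sR_def Qty_def
  using DERIV_cdivide[OF DERIV_add[OF DERIV_const has_real_derivative_integral_Ici[OF continuous_on_Phi]]]
  by simp

lemma dt_psiR:
  assumes "0 < R" "0 \<le> t"
  shows "dt (psiR b \<eta> p R) x t = G' (sR b R x t) * (Phi b t / R)"
  unfolding dt_def psiR_eq_G
  by (rule vector_derivative_within_Ici[OF assms(2)],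
      rule DERIV_chain2[OF G_deriv[OF sR_pos[OF assms]] sR_deriv[OF assms(2)]])

lemma dt_dt_psiR:
  assumes "0 < R" "0 \<le> t"
  shows "dt (dt (psiR b \<eta> p R)) x t
    = G'' (sR b R x t) * (Phi b t / R)\<^sup>2 + G' (sR b R x t) * ((b t * Phi b t - 1) / R)"
proof -
  have "((\<lambda>\<tau>. G' (sR b R x \<tau>) * (Phi b \<tau> / R)) has_real_derivative
      G'' (sR b R x t) * (Phi b t / R) * (Phi b t / R) + (b t * Phi b t - 1) / R * G' (sR b R x t))
      (at t within {0..})"
    by (rule DERIV_mult[OF DERIV_chain2[OF G'_deriv[OF sR_pos[OF assms]] sR_deriv[OF assms(2)]]
          DERIV_cdivide[OF Phi_deriv[OF assms(2)]]])
  then have "((\<lambda>\<tau>. G' (sR b R x \<tau>) * (Phi b \<tau> / R)) has_real_derivative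
      G'' (sR b R x t) * (Phi b t / R)\<^sup>2 + G' (sR b R x t) * ((b t * Phi b t - 1) / R))
      (at t within {0..})"
    by (simp add: power2_eq_square mult_ac)
  then have "((\<lambda>\<tau>. dt (psiR b \<eta> p R) x \<tau>) has_real_derivative
      G'' (sR b R x t) * (Phi b t / R)\<^sup>2 + G' (sR b R x t) * ((b t * Phi b t - 1) / R))
      (at t within {0..})"
  proof (rule has_field_derivative_transform_within[where d = 1])
    fix \<tau> :: real assume "\<tau> \<in> {0..}"
    then show "G' (sR b R x \<tau>) * (Phi b \<tau> / R) = dt (psiR b \<eta> p R) x \<tau>"
      using dt_psiR[OF assms(1), of \<tau> x] by simp
  qed (use assms in auto)
  then show ?thesis
    unfolding dt_def[of "dt (psiR b \<eta> p R)"] by (rule vector_derivative_within_Ici[OF assms(2)])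
qed

lemma deriv2_psiR_along_axis:
  assumes "0 < R" "0 \<le> t"
  shows "deriv (deriv (\<lambda>r. psiR b \<eta> p R (x + r *\<^sub>R axis i 1) t)) 0
    = G'' (sR b R x t) * (2 * x $ i / R)\<^sup>2 + G' (sR b R x t) * (2 / R)"
proof -
  define \<sigma> where "\<sigma> r = sR b R (x + r *\<^sub>R axis i 1) t" for r
  have \<sigma>_eq: "\<sigma> = (\<lambda>r. sR b R x t + (2 * x $ i * r + r\<^sup>2) / R)"
    unfolding \<sigma>_def sR_def Qty_def norm_add_axis_square by (simp add: fun_eq_iff add_divide_distrib)
  have \<sigma>_pos: "0 < \<sigma> r" for r
    unfolding \<sigma>_def using sR_pos[OF assms] .
  have \<sigma>_deriv: "(\<sigma> has_real_derivative (2 * x $ i + 2 * r) / R) (at r)" for r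
    unfolding \<sigma>_eq using assms(1) by (auto intro!: derivative_eq_intros simp: field_simps)
  have \<sigma>'_deriv: "((\<lambda>r. (2 * x $ i + 2 * r) / R) has_real_derivative 2 / R) (at r)" for r
    using assms(1) by (auto intro!: derivative_eq_intros)
  have "deriv (\<lambda>r. G (\<sigma> r)) = (\<lambda>r. G' (\<sigma> r) * ((2 * x $ i + 2 * r) / R))"
    by (rule ext, rule DERIV_imp_deriv, rule DERIV_chain2[OF G_deriv[OF \<sigma>_pos] \<sigma>_deriv])
  moreover have "((\<lambda>r. G' (\<sigma> r) * ((2 * x $ i + 2 * r) / R)) has_real_derivative
      G'' (\<sigma> 0) * ((2 * x $ i + 2 * 0) / R) * ((2 * x $ i + 2 * 0) / R) + 2 / R * G' (\<sigma> 0)) (at 0)"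
    by (rule DERIV_mult[OF DERIV_chain2[OF G'_deriv[OF \<sigma>_pos] \<sigma>_deriv] \<sigma>'_deriv])
  moreover have "\<sigma> 0 = sR b R x t" unfolding \<sigma>_eq by simp
  ultimately show ?thesis
    unfolding psiR_eq_G \<sigma>_def[symmetric] by (simp add: DERIV_imp_deriv power2_eq_square mult_ac)
qed

lemma lap_psiR:
  fixes x :: "real ^ 'n"
  assumes "0 < R" "0 \<le> t"
  shows "lap (\<lambda>y. psiR b \<eta> p R y t) x
    = G'' (sR b R x t) * (4 * (norm x)\<^sup>2 / R\<^sup>2) + G' (sR b R x t) * (2 * CARD('n) / R)"
  unfolding lap_def deriv2_psiR_along_axis[OF assms] norm_square_eq_sum_components
  by (simp add: sum.distrib sum_distrib_left sum_divide_distrib power_divide power_mult_distrib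
      algebra_simps)

lemma psiR_eq_1_if_inP_half:
  assumes "0 < R" "inP b (R/2) x t"
  shows "psiR b \<eta> p R x t = 1"
proof -
  have "0 \<le> t" "sR b R x t \<le> 1/2"
    using assms unfolding inP_def sR_def by (auto simp: divide_le_eq)
  then show ?thesis
    using sR_pos[OF \<open>0 < R\<close>, of t x] eta_one unfolding psiR_def by simp
qed

lemma psiR_eq_0_if_not_inP:
  assumes "0 < R" "0 \<le> t" "\<not> inP b R x t"
  shows "psiR b \<eta> p R x t = 0"
proof -
  have "1 \<le> sR b R x t"
    using assms unfolding inP_def sR_def by (simp add: le_divide_eq)
  then show ?thesis using eta_zero unfolding psiR_def by simp
qed

lemma dt_psiR_bound:
  "\<exists>C>0. \<forall>R>0. \<forall>(x::real ^ 'n) t. inP b R x t \<longrightarrow>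
    \<bar>dt (psiR b \<eta> p R) x t\<bar> \<le> C / R * Phi b t * psiR_star b \<eta> p R x t powr (1/p)"
proof -
  obtain K where "0 < K" and K: "\<forall>s>0. \<bar>G' s\<bar> \<le> K * eta_star \<eta> s powr (2 * conj_exp p - 2)"
    using G'_G''_bounds by blast
  have "\<bar>dt (psiR b \<eta> p R) x t\<bar> \<le> K / R * Phi b t * psiR_star b \<eta> p R x t powr (1/p)"
    if "0 < R" "inP b R x t" for R and x :: "real ^ 'n" and t
  proof -
    have "0 \<le> t" using inP_bounds[OF that(2)] by simp
    then have "\<bar>dt (psiR b \<eta> p R) x t\<bar> = \<bar>G' (sR b R x t)\<bar> * (Phi b t / R)"
      using Phi_nonneg \<open>0 < R\<close> by (simp add: dt_psiR abs_mult)
    also have "\<dots> \<le> K * eta_star \<eta> (sR b R x t) powr (2 * conj_exp p - 2) * (Phi b t / R)"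
      using K sR_pos[OF \<open>0 < R\<close> \<open>0 \<le> t\<close>] Phi_nonneg[OF \<open>0 \<le> t\<close>] \<open>0 < R\<close>
      by (intro mult_right_mono) auto
    finally show ?thesis unfolding powr_psiR_star by (simp add: mult_ac)
  qed
  with \<open>0 < K\<close> show ?thesis by blast
qed

lemma lap_psiR_bound:
  "\<exists>C>0. \<forall>R>0. \<forall>(x::real ^ 'n) t. inP b R x t \<longrightarrow>
    \<bar>lap (\<lambda>y. psiR b \<eta> p R y t) x\<bar> \<le> C / R * psiR_star b \<eta> p R x t powr (1/p)"
proof -
  obtain K where "0 < K" and K: "\<forall>s>0. \<bar>G' s\<bar> \<le> K * eta_star \<eta> s powr (2 * conj_exp p - 2)
      \<and> \<bar>G'' s\<bar> \<le> K * eta_star \<eta> s powr (2 * conj_exp p - 2)"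
    using G'_G''_bounds by blast
  have "\<bar>lap (\<lambda>y. psiR b \<eta> p R y t) x\<bar>
      \<le> K * (4 + 2 * CARD('n)) / R * psiR_star b \<eta> p R x t powr (1/p)"
    if "0 < R" "inP b R x t" for R and x :: "real ^ 'n" and t
  proof -
    have "0 \<le> t" "(norm x)\<^sup>2 \<le> R" using inP_bounds[OF that(2)] by simp_all
    then have "4 * (norm x)\<^sup>2 / R\<^sup>2 \<le> 4 / R"
      using \<open>0 < R\<close> by (simp add: power2_eq_square divide_le_eq)
    then have "\<bar>lap (\<lambda>y. psiR b \<eta> p R y t) x\<bar>
        \<le> K * eta_star \<eta> (sR b R x t) powr (2 * conj_exp p - 2) * (4 / R + 2 * CARD('n) / R)"
      unfolding lap_psiR[OF \<open>0 < R\<close> \<open>0 \<le> t\<close>] using K sR_pos[OF \<open>0 < R\<close> \<open>0 \<le> t\<close>] \<open>0 < R\<close>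
      by (intro abs_mult_add_mult_le) auto
    also have "\<dots> = K * (4 + 2 * CARD('n)) / R * eta_star \<eta> (sR b R x t) powr (2 * conj_exp p - 2)"
      using \<open>0 < R\<close> by (simp add: field_simps)
    finally show ?thesis unfolding powr_psiR_star .
  qed
  moreover have "0 < K * (4 + 2 * CARD('n))" using \<open>0 < K\<close> by simp
  ultimately show ?thesis by blast
qed

lemma dt_dt_psiR_bound:
  "\<exists>C>0. \<forall>R>0. \<forall>(x::real ^ 'n) t. inP b R x t \<longrightarrow>
    \<bar>dt (dt (psiR b \<eta> p R)) x t\<bar> \<le> C / R * psiR_star b \<eta> p R x t powr (1/p)"
proof -
  obtain K where "0 < K" and K: "\<forall>s>0. \<bar>G' s\<bar> \<le> K * eta_star \<eta> s powr (2 * conj_exp p - 2)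
      \<and> \<bar>G'' s\<bar> \<le> K * eta_star \<eta> s powr (2 * conj_exp p - 2)"
    using G'_G''_bounds by blast
  obtain L where "0 < L" and L: "\<forall>t\<ge>0. \<bar>b t * Phi b t - 1\<bar> \<le> L"
    using b_Phi_bounded by blast
  obtain C where "0 \<le> C" and C: "\<forall>t\<ge>0. (Phi b t)\<^sup>2 \<le> C * (1 + integral {0..t} (Phi b))"
    using Phi_square_bound by blast
  have "\<bar>dt (dt (psiR b \<eta> p R)) x t\<bar> \<le> K * (C + L) / R * psiR_star b \<eta> p R x t powr (1/p)"
    if "0 < R" "inP b R x t" for R and x :: "real ^ 'n" and t
  proof -
    have "0 \<le> t" "1 + integral {0..t} (Phi b) \<le> R" using inP_bounds[OF that(2)] by simp_all
    then have "(Phi b t)\<^sup>2 \<le> C * R"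
      using C \<open>0 \<le> C\<close> by (meson mult_left_mono order_trans)
    then have "\<bar>(Phi b t / R)\<^sup>2\<bar> \<le> C / R"
      using \<open>0 < R\<close> by (simp add: power_divide power2_eq_square divide_le_eq)
    moreover have "\<bar>(b t * Phi b t - 1) / R\<bar> \<le> L / R"
      using L \<open>0 \<le> t\<close> \<open>0 < R\<close> by (simp add: divide_right_mono)
    ultimately have "\<bar>dt (dt (psiR b \<eta> p R)) x t\<bar>
        \<le> K * eta_star \<eta> (sR b R x t) powr (2 * conj_exp p - 2) * (C / R + L / R)"
      unfolding dt_dt_psiR[OF \<open>0 < R\<close> \<open>0 \<le> t\<close>] using K sR_pos[OF \<open>0 < R\<close> \<open>0 \<le> t\<close>]
      by (intro abs_mult_add_mult_le) auto
    also have "\<dots> = K * (C + L) / R * eta_star \<eta> (sR b R x t) powr (2 * conj_exp p - 2)"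
      using \<open>0 < R\<close> by (simp add: field_simps)
    finally show ?thesis unfolding powr_psiR_star .
  qed
  moreover have "0 < K * (C + L)" using \<open>0 < K\<close> \<open>0 \<le> C\<close> \<open>0 < L\<close> by simp
  ultimately show ?thesis by blast
qed

end

theorem lemma2p5:
  fixes p :: real and b b' \<eta> \<eta>' \<eta>'' :: "real \<Rightarrow> real"
  assumes p: "p > 1"
    and b_deriv: "\<forall>t\<ge>0. (b has_real_derivative b' t) (at t within {0..})"
    and b'_cont: "continuous_on {0..} b'"
    and b_pos: "\<forall>t\<ge>0. b t > 0"
    and b_limsup: "Limsup at_top (\<lambda>t. ereal (\<bar>b' t\<bar> / (b t)\<^sup>2)) < 1"
    and eta_deriv: "\<forall>s\<ge>0. (\<eta> has_real_derivative \<eta>' s) (at s within {0..})"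
    and eta'_deriv: "\<forall>s\<ge>0. (\<eta>' has_real_derivative \<eta>'' s) (at s within {0..})"
    and eta''_cont: "continuous_on {0..} \<eta>''"
    and eta_one: "\<forall>s. 0 \<le> s \<and> s \<le> 1/2 \<longrightarrow> \<eta> s = 1"
    and eta_decr: "\<forall>s t. 1/2 < s \<and> s \<le> t \<and> t < 1 \<longrightarrow> \<eta> t \<le> \<eta> s"
    and eta_zero: "\<forall>s\<ge>1. \<eta> s = 0"
  shows
    "(\<forall>R>0. \<forall>(x::real^'n) t.
        (inP b (R/2) x t \<longrightarrow> psiR b \<eta> p R x t = 1) \<and>
        (t \<ge> 0 \<and> \<not> inP b R x t \<longrightarrow> psiR b \<eta> p R x t = 0))
   \<and> (\<exists>C1>0. \<forall>R>0. \<forall>(x::real^'n) t. inP b R x t \<longrightarrow>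
        \<bar>dt (psiR b \<eta> p R) x t\<bar> \<le> C1 / R * Phi b t * (psiR_star b \<eta> p R x t) powr (1/p))
   \<and> (\<exists>C2>0. \<forall>R>0. \<forall>(x::real^'n) t. inP b R x t \<longrightarrow>
        \<bar>lap (\<lambda>y. psiR b \<eta> p R y t) x\<bar> \<le> C2 / R * (psiR_star b \<eta> p R x t) powr (1/p))
   \<and> (\<not> ((\<lambda>t. 1 / b t) integrable_on {0..}) \<longrightarrow>
      (\<exists>C3>0. \<forall>R>0. \<forall>(x::real^'n) t. inP b R x t \<longrightarrow>
        \<bar>dt (dt (psiR b \<eta> p R)) x t\<bar> \<le> C3 / R * (psiR_star b \<eta> p R x t) powr (1/p)))"
proof -
  have "2 < 2 * conj_exp p"
    using p by (simp add: conj_exp_def less_divide_eq)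
  then interpret test_function b b' \<eta> \<eta>' \<eta>'' p
    by unfold_locales (use assms in auto)
  show ?thesis
  proof (intro conjI impI)
    show "\<forall>R>0. \<forall>(x::real ^ 'n) t.
        (inP b (R/2) x t \<longrightarrow> psiR b \<eta> p R x t = 1) \<and>
        (t \<ge> 0 \<and> \<not> inP b R x t \<longrightarrow> psiR b \<eta> p R x t = 0)"
      by (auto intro: psiR_eq_1_if_inP_half psiR_eq_0_if_not_inP)
  qed (rule dt_psiR_bound lap_psiR_bound dt_dt_psiR_bound)+
qed

end
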